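(* In a multi-unit auction with $m$ identical items, there exists a randomized (universally) obviously strategy-proof mechanism that achieves a $400$-approximation to the optimal social welfare for bidders with decreasing marginal valuations.
   Context: Bidder $i$'s valuation is $v_i:\{0,1,\dots,m\}\to\mathbb{R}_{\ge0}$ with $v_i(0)=0$; it has decreasing marginals if $v_i(j)-v_i(j-1)\ge v_i(j+1)-v_i(j)$ for every $j$ with $1\le j\le m-1$. Valuations are private, the domain is all such valuations, utilities quasi-linear. $\mathrm{OPT}$ is the maximum of $\sum_iv_i(q_i)$ over nonnegative integers with $\sum_iq_i\le m$. A deterministic mechanism is a rooted tree: each internal node is assigned to one bidder, who sends one of the messages labeling the outgoing edges; each leaf is labeled with a feasible allocation and payments. A behavior $B_i$ specifies a message at every node of bidder $i$; a profile $B$ determines a path $\mathrm{Path}(B)$ with allocation $f_i(B)$ and payment $p_i(B)$ for $i$. A strategy $\mathcal S_i$ maps each valuation to a behavior; it is obviously dominant if for every $v_i$, every node $u$ of $i$, every $B_{-i}$ and every profile $B'$ with $u\in\mathrm{Path}(\mathcal S_i(v_i),B_{-i})\cap\mathrm{Path}(B')$ and $B'_i$ sending at $u$ a message different from $\mathcal S_i(v_i)$'s, $v_i(f_i(\mathcal S_i(v_i),B_{-i}))-p_i(\mathcal S_i(v_i),B_{-i})\ge v_i(f_i(B'))-p_i(B')$. A randomized mechanism (distribution over deterministic mechanisms with strategies) is universally OSP if each mechanism in its support is OSP; it gives an $\alpha$-approximation if for every profile $\mathrm{OPT}\le\alpha\,\mathbb{E}[\text{welfare}]$ when bidders follow their strategies.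 *)

theory Defs
  imports "HOL-Probability.Probability"
begin

text \<open>Valuations on {0..m}: represented as functions nat => real, normalised to 0 beyond m.\<close>
definition dm_valuation :: "nat \<Rightarrow> (nat \<Rightarrow> real) \<Rightarrow> bool" where
  "dm_valuation m v \<longleftrightarrow> v 0 = 0 \<and> (\<forall>j\<le>m. v j \<ge> 0) \<and> (\<forall>j>m. v j = 0) \<and>
     (\<forall>j. 1 \<le> j \<and> j + 1 \<le> m \<longrightarrow> v j - v (j - 1) \<ge> v (j + 1) - v j)"

definition OPT :: "nat \<Rightarrow> nat \<Rightarrow> (nat \<Rightarrow> nat \<Rightarrow> real) \<Rightarrow> real" where
  "OPT n m v = Max {(\<Sum>i<n. v i (q i)) | q :: nat \<Rightarrow> nat. (\<Sum>i<n. q i) \<le> m}"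

text \<open>Deterministic mechanism trees (every path is finite). A node is owned by a bidder,
  has a set of allowed messages and a child for each message. A leaf carries an
  allocation (numbers of units) and payments.\<close>
datatype 'msg mech =
    Leaf "nat \<Rightarrow> nat" "nat \<Rightarrow> real"
  | Node nat "'msg set" "'msg \<Rightarrow> 'msg mech"

text \<open>Nodes are identified by their message history from the root.\<close>
primrec subtree :: "'msg mech \<Rightarrow> 'msg list \<Rightarrow> 'msg mech option" where
  "subtree (Leaf a p) h = (case h of [] \<Rightarrow> Some (Leaf a p) | x # xs \<Rightarrow> None)"
| "subtree (Node i M c) h = (case h of [] \<Rightarrow> Some (Node i M c)
     | x # xs \<Rightarrow> (if x \<in> M then subtree (c x) xs else None))"

primrec wf_mech :: "nat \<Rightarrow> nat \<Rightarrow> 'msg mech \<Rightarrow> bool" where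
  "wf_mech n m (Leaf a p) \<longleftrightarrow> (\<Sum>i<n. a i) \<le> m"
| "wf_mech n m (Node i M c) \<longleftrightarrow> i < n \<and> M \<noteq> {} \<and> (\<forall>x\<in>M. wf_mech n m (c x))"

definition behavior :: "'msg mech \<Rightarrow> nat \<Rightarrow> ('msg list \<Rightarrow> 'msg) \<Rightarrow> bool" where
  "behavior t i b \<longleftrightarrow> (\<forall>h M c. subtree t h = Some (Node i M c) \<longrightarrow> b h \<in> M)"

definition profile :: "nat \<Rightarrow> 'msg mech \<Rightarrow> (nat \<Rightarrow> 'msg list \<Rightarrow> 'msg) \<Rightarrow> bool" where
  "profile n t B \<longleftrightarrow> (\<forall>i<n. behavior t i (B i))"

primrec path_from :: "'msg mech \<Rightarrow> (nat \<Rightarrow> 'msg list \<Rightarrow> 'msg) \<Rightarrow> 'msg list \<Rightarrow> 'msg list" where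
  "path_from (Leaf a p) B h = h"
| "path_from (Node i M c) B h = path_from (c (B i h)) B (h @ [B i h])"

primrec outcome_from :: "'msg mech \<Rightarrow> (nat \<Rightarrow> 'msg list \<Rightarrow> 'msg) \<Rightarrow> 'msg list \<Rightarrow> (nat \<Rightarrow> nat) \<times> (nat \<Rightarrow> real)" where
  "outcome_from (Leaf a p) B h = (a, p)"
| "outcome_from (Node i M c) B h = outcome_from (c (B i h)) B (h @ [B i h])"

definition Path :: "'msg mech \<Rightarrow> (nat \<Rightarrow> 'msg list \<Rightarrow> 'msg) \<Rightarrow> 'msg list" where
  "Path t B = path_from t B []"

definition on_path :: "'msg mech \<Rightarrow> (nat \<Rightarrow> 'msg list \<Rightarrow> 'msg) \<Rightarrow> 'msg list \<Rightarrow> bool" where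
  "on_path t B u \<longleftrightarrow> prefix u (Path t B)"

definition alloc :: "'msg mech \<Rightarrow> (nat \<Rightarrow> 'msg list \<Rightarrow> 'msg) \<Rightarrow> nat \<Rightarrow> nat" where
  "alloc t B i = fst (outcome_from t B []) i"

definition pay :: "'msg mech \<Rightarrow> (nat \<Rightarrow> 'msg list \<Rightarrow> 'msg) \<Rightarrow> nat \<Rightarrow> real" where
  "pay t B i = snd (outcome_from t B []) i"

definition strategies :: "nat \<Rightarrow> nat \<Rightarrow> 'msg mech \<Rightarrow> (nat \<Rightarrow> (nat \<Rightarrow> real) \<Rightarrow> 'msg list \<Rightarrow> 'msg) \<Rightarrow> bool" where
  "strategies n m t S \<longleftrightarrow> (\<forall>i<n. \<forall>v. dm_valuation m v \<longrightarrow> behavior t i (S i v))"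

definition OSP :: "nat \<Rightarrow> nat \<Rightarrow> 'msg mech \<Rightarrow> (nat \<Rightarrow> (nat \<Rightarrow> real) \<Rightarrow> 'msg list \<Rightarrow> 'msg) \<Rightarrow> bool" where
  "OSP n m t S \<longleftrightarrow>
    (\<forall>i<n. \<forall>v. dm_valuation m v \<longrightarrow>
      (\<forall>u M c B B'. subtree t u = Some (Node i M c) \<longrightarrow>
         profile n t B \<longrightarrow> profile n t B' \<longrightarrow>
         on_path t (B(i := S i v)) u \<longrightarrow> on_path t B' u \<longrightarrow>
         B' i u \<noteq> S i v u \<longrightarrow>
         v (alloc t (B(i := S i v)) i) - pay t (B(i := S i v)) i \<ge> v (alloc t B' i) - pay t B' i))"

definition welfare :: "nat \<Rightarrow> 'msg mech \<Rightarrow> (nat \<Rightarrow> (nat \<Rightarrow> real) \<Rightarrow> 'msg list \<Rightarrow> 'msg) \<Rightarrow> (nat \<Rightarrow> nat \<Rightarrow> real) \<Rightarrow> real" where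
  "welfare n t S v = (\<Sum>i<n. v i (alloc t (\<lambda>j. S j (v j)) i))"

definition universally_OSP :: "nat \<Rightarrow> nat \<Rightarrow> ('msg mech \<times> (nat \<Rightarrow> (nat \<Rightarrow> real) \<Rightarrow> 'msg list \<Rightarrow> 'msg)) pmf \<Rightarrow> bool" where
  "universally_OSP n m R \<longleftrightarrow>
     (\<forall>(t, S) \<in> set_pmf R. wf_mech n m t \<and> strategies n m t S \<and> OSP n m t S)"

definition approximation :: "nat \<Rightarrow> nat \<Rightarrow> real \<Rightarrow> ('msg mech \<times> (nat \<Rightarrow> (nat \<Rightarrow> real) \<Rightarrow> 'msg list \<Rightarrow> 'msg)) pmf \<Rightarrow> bool" where
  "approximation n m \<alpha> R \<longleftrightarrow>
     (\<forall>v. (\<forall>i<n. dm_valuation m (v i)) \<longrightarrow>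
        OPT n m v \<le> \<alpha> * measure_pmf.expectation R (\<lambda>(t, S). welfare n t S v))"

end

theory Submission
  imports Defs "HOL-Combinatorics.Multiset_Permutations"
begin

text \<open>Bidders are served in a uniformly random order. The first \<open>L - 1 \<approx> 2n/3\<close> of them
  only report their valuations. Every later bidder is offered any quantity \<open>q \<le> k = \<lceil>m/2\<rceil>\<close>
  of the remaining units at the externality price \<open>G(A, k) - G(A, k - q)\<close>, where \<open>A\<close> is the
  set of bidders that have reported and \<open>G(A, s) = max_value A w s\<close> is the optimal welfare of
  \<open>s\<close> units among \<open>A\<close>; then it reports as well. A bidder's outcome is settled by its one
  choice from a menu priced by the others' reports, so choosing a utility maximiser and
  reporting truthfully is obviously dominant. Its share in an optimal allocation of \<open>k\<close> units
  among \<open>A\<close> and itself is such a maximiser, and it gets exactly that share as long as the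
  shares planned for earlier bidders leave \<open>k\<close> units. The planned shares total at most
  \<open>k/2\<close> in expectation, so by Markov's inequality this happens for at least half of the
  orders; averaging over the orders, the bidders then collect a \<open>(n + 1 - L)/(2n) \<ge> 1/6\<close>
  fraction of \<open>G(N, k)\<close>, while subadditivity gives \<open>OPT \<le> 2 G(N, k)\<close>; the approximation
  factor is thus 12.\<close>

section \<open>Optimal allocations of a fixed number of units\<close>

lemma arg_max_on_finite:
  fixes f :: "'a \<Rightarrow> 'b::linorder"
  assumes "finite S" "S \<noteq> {}"
  shows "arg_max_on f S \<in> S" and "y \<in> S \<Longrightarrow> f y \<le> f (arg_max_on f S)"
proof -
  have "Max (f ` S) \<in> f ` S"
    using assms by simp
  then obtain x where "x \<in> S" "f x = Max (f ` S)"
    by force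
  then have "is_arg_max f (\<lambda>x. x \<in> S) x"
    using assms by (auto simp: is_arg_max_linorder)
  then have "is_arg_max f (\<lambda>x. x \<in> S) (arg_max_on f S)"
    unfolding arg_max_on_def arg_max_def by (rule someI)
  then show "arg_max_on f S \<in> S" and "y \<in> S \<Longrightarrow> f y \<le> f (arg_max_on f S)"
    by (auto simp: is_arg_max_linorder)
qed

definition feasible_allocs :: "'a set \<Rightarrow> nat \<Rightarrow> ('a \<Rightarrow> nat) set" where
  "feasible_allocs A s = {q. (\<forall>i. i \<notin> A \<longrightarrow> q i = 0) \<and> sum q A \<le> s}"

definition opt_alloc :: "'a set \<Rightarrow> ('a \<Rightarrow> nat \<Rightarrow> real) \<Rightarrow> nat \<Rightarrow> 'a \<Rightarrow> nat" where
  "opt_alloc A w s = arg_max_on (\<lambda>q. \<Sum>i\<in>A. w i (q i)) (feasible_allocs A s)"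

definition max_value :: "'a set \<Rightarrow> ('a \<Rightarrow> nat \<Rightarrow> real) \<Rightarrow> nat \<Rightarrow> real" where
  "max_value A w s = (\<Sum>i\<in>A. w i (opt_alloc A w s i))"

lemma finite_feasible_allocs:
  assumes "finite A"
  shows "finite (feasible_allocs A s)"
proof -
  have "q i \<le> s" if "q \<in> feasible_allocs A s" "i \<in> A" for q i
    using member_le_sum[of i A q] that assms by (simp add: feasible_allocs_def)
  then have "feasible_allocs A s \<subseteq> {q. \<forall>i. (i \<in> A \<longrightarrow> q i \<in> {..s}) \<and> (i \<notin> A \<longrightarrow> q i = 0)}"
    by (auto simp: feasible_allocs_def)
  then show ?thesis
    using finite_set_of_finite_funs[OF assms, of "{..s}" 0] finite_subset by blast
qed

lemma opt_alloc_is_arg_max: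
  assumes "finite A"
  shows "opt_alloc A w s \<in> feasible_allocs A s"
    and "q \<in> feasible_allocs A s \<Longrightarrow> (\<Sum>i\<in>A. w i (q i)) \<le> max_value A w s"
proof -
  have "(\<lambda>_. 0) \<in> feasible_allocs A s"
    by (simp add: feasible_allocs_def)
  then have "feasible_allocs A s \<noteq> {}"
    by blast
  note max = arg_max_on_finite[OF finite_feasible_allocs[OF assms] this, where f="\<lambda>q. \<Sum>i\<in>A. w i (q i)"]
  show "opt_alloc A w s \<in> feasible_allocs A s"
    using max(1) unfolding opt_alloc_def .
  show "q \<in> feasible_allocs A s \<Longrightarrow> (\<Sum>i\<in>A. w i (q i)) \<le> max_value A w s"
    using max(2) unfolding opt_alloc_def max_value_def .
qed

lemma opt_alloc_sum_le:
  assumes "finite A"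
  shows "sum (opt_alloc A w s) A \<le> s"
  using opt_alloc_is_arg_max(1)[OF assms] by (simp add: feasible_allocs_def)

lemma opt_alloc_le:
  assumes "finite A" "i \<in> A"
  shows "opt_alloc A w s i \<le> s"
  using member_le_sum[of i A "opt_alloc A w s"] opt_alloc_sum_le[of A w s] assms by simp

lemma max_value_ge:
  assumes "finite A" "sum q A \<le> s"
  shows "(\<Sum>i\<in>A. w i (q i)) \<le> max_value A w s"
proof -
  let ?r = "\<lambda>i. if i \<in> A then q i else 0"
  have "?r \<in> feasible_allocs A s"
    using assms(2) by (simp add: feasible_allocs_def)
  moreover have "(\<Sum>i\<in>A. w i (?r i)) = (\<Sum>i\<in>A. w i (q i))"
    by simp
  ultimately show ?thesis
    using opt_alloc_is_arg_max(2)[OF assms(1), of ?r s w] by simp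
qed

lemma opt_alloc_cong: "(\<And>i. i \<in> A \<Longrightarrow> w i = w' i) \<Longrightarrow> opt_alloc A w s = opt_alloc A w' s"
  unfolding opt_alloc_def by (simp cong: sum.cong)

lemma max_value_cong: "(\<And>i. i \<in> A \<Longrightarrow> w i = w' i) \<Longrightarrow> max_value A w s = max_value A w' s"
  unfolding max_value_def using opt_alloc_cong[of A w w' s] by simp

lemma max_value_insert_ge:
  assumes "finite A" "a \<notin> A" "q \<le> s"
  shows "w a q + max_value A w (s - q) \<le> max_value (insert a A) w s"
proof -
  let ?p = "(opt_alloc A w (s - q))(a := q)"
  have "sum ?p A = sum (opt_alloc A w (s - q)) A"
    using assms(2) by (intro sum.cong) auto
  then have "sum ?p (insert a A) \<le> s"
    using opt_alloc_sum_le[OF assms(1), of w "s - q"] assms by simp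
  then have "(\<Sum>i\<in>insert a A. w i (?p i)) \<le> max_value (insert a A) w s"
    using assms(1) by (intro max_value_ge) auto
  moreover have "(\<Sum>i\<in>A. w i (?p i)) = max_value A w (s - q)"
    unfolding max_value_def using assms(2) by (intro sum.cong) auto
  ultimately show ?thesis
    using assms(1,2) by simp
qed

lemma max_value_insert_le:
  fixes w :: "'a \<Rightarrow> nat \<Rightarrow> real" and s :: nat
  assumes "finite A" "a \<notin> A"
  defines "x \<equiv> opt_alloc (insert a A) w s a"
  shows "max_value (insert a A) w s \<le> w a x + max_value A w (s - x)"
proof -
  let ?c = "opt_alloc (insert a A) w s"
  have "sum ?c A \<le> s - x"
    using opt_alloc_sum_le[of "insert a A" w s] assms by simp
  then have "(\<Sum>i\<in>A. w i (?c i)) \<le> max_value A w (s - x)"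
    by (rule max_value_ge[OF assms(1)])
  then show ?thesis
    unfolding max_value_def[of "insert a A"] x_def using assms(1,2) by simp
qed

text \<open>Up to the constant \<open>max_value A w s\<close>, the utility of buying \<open>q\<close> units at the externality price
  is the welfare \<open>w a q + max_value A w (s - q)\<close> of then allocating the rest optimally.\<close>

lemma opt_share_best_response:
  fixes w :: "'a \<Rightarrow> nat \<Rightarrow> real"
  assumes "finite A" "a \<notin> A" "q \<le> s"
  defines "x \<equiv> opt_alloc (insert a A) w s a"
  shows "w a q - (max_value A w s - max_value A w (s - q)) \<le> w a x - (max_value A w s - max_value A w (s - x))"
  using max_value_insert_ge[OF assms(1-3), of w] max_value_insert_le[OF assms(1,2), of w s]
  unfolding x_def by linarith

lemma sum_max_value_remove:
  assumes "finite B"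
  shows "(real (card B) - 1) * max_value B v s \<le> (\<Sum>x\<in>B. max_value (B - {x}) v s)"
proof -
  let ?c = "opt_alloc B v s"
  have "max_value B v s - v x (?c x) \<le> max_value (B - {x}) v s" if "x \<in> B" for x
  proof -
    have "sum ?c (B - {x}) \<le> s"
      using sum_mono2[of B "B - {x}" ?c] opt_alloc_sum_le[of B v s] assms by simp
    then have "(\<Sum>i\<in>B - {x}. v i (?c i)) \<le> max_value (B - {x}) v s"
      using assms by (intro max_value_ge) auto
    moreover have "max_value B v s = v x (?c x) + (\<Sum>i\<in>B - {x}. v i (?c i))"
      unfolding max_value_def by (rule sum.remove[OF assms that])
    ultimately show ?thesis
      by linarith
  qed
  then have "(\<Sum>x\<in>B. max_value B v s - v x (?c x)) \<le> (\<Sum>x\<in>B. max_value (B - {x}) v s)"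
    by (rule sum_mono)
  moreover have "(\<Sum>x\<in>B. max_value B v s - v x (?c x)) = real (card B) * max_value B v s - max_value B v s"
    by (simp add: sum_subtractf max_value_def)
  ultimately show ?thesis
    by (simp add: left_diff_distrib)
qed

section \<open>Valuations with decreasing marginals\<close>

lemma dm_valuation_nonneg: "dm_valuation m v \<Longrightarrow> 0 \<le> v q"
  unfolding dm_valuation_def by (cases "q \<le> m") auto

lemma dm_valuation_marginal_antimono:
  assumes "dm_valuation m v" "j \<le> k" "k + 1 \<le> m"
  shows "v (k + 1) - v k \<le> v (j + 1) - v j"
  using assms(2,3)
proof (induction k)
  case 0
  then show ?case by simp
next
  case (Suc k)
  show ?case
  proof (cases "j = Suc k")
    case False
    have "1 \<le> Suc k \<and> Suc k + 1 \<le> m \<longrightarrow> v (Suc k + 1) - v (Suc k) \<le> v (Suc k) - v (Suc k - 1)"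
      using assms(1) unfolding dm_valuation_def by blast
    then have "v (Suc k + 1) - v (Suc k) \<le> v (k + 1) - v k"
      using Suc.prems by simp
    moreover have "v (k + 1) - v k \<le> v (j + 1) - v j"
      using Suc False by simp
    ultimately show ?thesis
      by linarith
  qed simp
qed

lemma dm_valuation_subadditive:
  assumes "dm_valuation m v"
  shows "v (a + b) \<le> v a + v b"
proof (cases "a + b \<le> m")
  case True
  then show ?thesis
  proof (induction a)
    case 0
    then show ?case using assms by (simp add: dm_valuation_def)
  next
    case (Suc a)
    have "v (a + b + 1) - v (a + b) \<le> v (a + 1) - v a"
      using dm_valuation_marginal_antimono[OF assms, of a "a + b"] Suc.prems by simp
    then show ?case
      using Suc by simp
  qed
next
  case False
  then show ?thesis
    using assms dm_valuation_nonneg[OF assms] by (simp add: dm_valuation_def)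
qed

lemma split_sum_le_add:
  fixes q :: "nat \<Rightarrow> nat"
  assumes "(\<Sum>i<n. q i) \<le> s1 + s2"
  shows "\<exists>a b. (\<forall>i. a i + b i = q i) \<and> (\<Sum>i<n. a i) \<le> s1 \<and> (\<Sum>i<n. b i) \<le> s2"
  using assms
proof (induction n arbitrary: s1 s2)
  case 0
  show ?case
    by (rule exI[of _ q], rule exI[of _ "\<lambda>_. 0"]) simp
next
  case (Suc n)
  let ?an = "min (q n) s1"
  let ?bn = "q n - ?an"
  have "(\<Sum>i<n. q i) \<le> (s1 - ?an) + (s2 - ?bn)"
    using Suc.prems by auto
  then obtain a b where ab: "\<forall>i. a i + b i = q i" "(\<Sum>i<n. a i) \<le> s1 - ?an" "(\<Sum>i<n. b i) \<le> s2 - ?bn"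
    using Suc.IH by blast
  have "(\<Sum>i<Suc n. (a(n := ?an)) i) = (\<Sum>i<n. a i) + ?an"
    and "(\<Sum>i<Suc n. (b(n := ?bn)) i) = (\<Sum>i<n. b i) + ?bn"
    by simp_all
  moreover have "?bn \<le> s2"
    using Suc.prems by auto
  ultimately show ?case
    using ab by (intro exI[of _ "a(n := ?an)"] exI[of _ "b(n := ?bn)"]) auto
qed

lemma OPT_le:
  assumes "\<And>q. (\<Sum>i<n. q i) \<le> m \<Longrightarrow> (\<Sum>i<n. v i (q i)) \<le> B"
  shows "OPT n m v \<le> B"
proof -
  let ?val = "\<lambda>q. \<Sum>i<n. v i (q i)"
  let ?S = "{?val q | q. (\<Sum>i<n. q i) \<le> m}"
  have "?S \<subseteq> ?val ` feasible_allocs {..<n} m"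
  proof
    fix x assume "x \<in> ?S"
    then obtain q where q: "x = ?val q" "(\<Sum>i<n. q i) \<le> m"
      by blast
    let ?r = "\<lambda>i. if i < n then q i else 0"
    show "x \<in> ?val ` feasible_allocs {..<n} m"
      using q by (intro image_eqI[where x="?r"]) (simp_all add: feasible_allocs_def)
  qed
  then have "finite ?S"
    using finite_feasible_allocs[of "{..<n}" m] finite_subset by blast
  moreover have "?val (\<lambda>_. 0) \<in> ?S"
    by auto
  ultimately have "Max ?S \<le> B"
    using assms by (intro Max.boundedI) auto
  then show ?thesis
    unfolding OPT_def .
qed

lemma OPT_le_twice_max_value:
  assumes "\<forall>i<n. dm_valuation m (v i)" and "m \<le> 2 * s"
  shows "OPT n m v \<le> 2 * max_value {..<n} v s"
proof (rule OPT_le)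
  fix q assume "(\<Sum>i<n. q i) \<le> m"
  then obtain a b where ab: "\<forall>i. a i + b i = q i" "(\<Sum>i<n. a i) \<le> s" "(\<Sum>i<n. b i) \<le> s"
    using split_sum_le_add[where n=n and q=q and ?s1.0=s and ?s2.0=s] assms(2) by auto
  have "(\<Sum>i<n. v i (q i)) \<le> (\<Sum>i<n. v i (a i)) + (\<Sum>i<n. v i (b i))"
    unfolding sum.distrib[symmetric] ab(1)[rule_format, symmetric]
    using assms(1) dm_valuation_subadditive by (intro sum_mono) blast
  also have "\<dots> \<le> 2 * max_value {..<n} v s"
    using max_value_ge[of "{..<n}" a s v] max_value_ge[of "{..<n}" b s v] ab by simp
  finally show "(\<Sum>i<n. v i (q i)) \<le> 2 * max_value {..<n} v s" .
qed

section \<open>Sequential posted-price mechanisms\<close>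

lemma path_from_extends: "\<exists>z. path_from t B h = h @ z"
proof (induction t arbitrary: h)
  case (Node i M c)
  then obtain z where "path_from (c (B i h)) B (h @ [B i h]) = (h @ [B i h]) @ z"
    by blast
  then show ?case
    by simp
qed simp

lemma outcome_from_subtree:
  "subtree t u = Some t' \<Longrightarrow> prefix (h @ u) (path_from t B h) \<Longrightarrow>
   outcome_from t B h = outcome_from t' B (h @ u)"
proof (induction t arbitrary: h u)
  case (Leaf a p)
  then show ?case by (cases u) auto
next
  case (Node i M c)
  show ?case
  proof (cases u)
    case (Cons x u')
    with Node.prems have "x \<in> M" and sub: "subtree (c x) u' = Some t'"
      by (auto split: if_splits)
    obtain z where z: "path_from (c (B i h)) B (h @ [B i h]) = (h @ [B i h]) @ z"
      using path_from_extends by blast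
    with Node.prems(2) Cons have "prefix (h @ x # u') (h @ B i h # z)"
      by simp
    then have x: "x = B i h" and "prefix ((h @ [x]) @ u') (path_from (c x) B (h @ [x]))"
      using z by auto
    then show ?thesis
      using Node.IH[OF _ sub] Cons by simp
  qed (use Node.prems in simp)
qed

lemma outcome_after_node:
  assumes "subtree t u = Some (Node i M c)" and "on_path t B u"
  shows "outcome_from t B [] = outcome_from (c (B i u)) B (u @ [B i u])"
  using outcome_from_subtree[OF assms(1), of "[]" B] assms(2)
  by (simp add: on_path_def Path_def)

record auction_state =
  known :: "nat set"
  reports :: "nat \<Rightarrow> nat \<Rightarrow> real"
  sold :: "nat \<Rightarrow> nat"
  charged :: "nat \<Rightarrow> real"
  remaining :: nat

datatype step = Offer nat | Ask nat nat | Learn nat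

fun owner :: "step \<Rightarrow> nat" where
  "owner (Offer a) = a"
| "owner (Ask a t) = a"
| "owner (Learn a) = a"

definition price :: "nat \<Rightarrow> auction_state \<Rightarrow> nat \<Rightarrow> real" where
  "price k st q = max_value (known st) (reports st) k - max_value (known st) (reports st) (k - q)"

definition offer_cap :: "nat \<Rightarrow> auction_state \<Rightarrow> nat" where
  "offer_cap k st = min k (remaining st)"

definition utility :: "nat \<Rightarrow> nat \<Rightarrow> (nat \<Rightarrow> real) \<Rightarrow> auction_state \<Rightarrow> nat \<Rightarrow> real" where
  "utility k a v st q = v (sold st a + q) - (charged st a + price k st q)"

text \<open>Among the utility-maximising quantities the bidder picks its share in an optimal allocation
  of \<open>k\<close> units among the known bidders and itself, whenever that share is one: the welfare
  analysis relies on this tie-breaking.\<close>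

definition offer_choice :: "nat \<Rightarrow> nat \<Rightarrow> (nat \<Rightarrow> real) \<Rightarrow> auction_state \<Rightarrow> nat" where
  "offer_choice k a v st =
     (let c = offer_cap k st; u = utility k a v st;
          x = opt_alloc (insert a (known st)) ((reports st)(a := v)) k a
      in if x \<le> c \<and> (\<forall>q\<le>c. u q \<le> u x) then x else arg_max_on u {..c})"

definition purchase :: "nat \<Rightarrow> nat \<Rightarrow> nat \<Rightarrow> auction_state \<Rightarrow> auction_state" where
  "purchase k a q st =
     st\<lparr>sold := (sold st)(a := sold st a + q), charged := (charged st)(a := charged st a + price k st q),
        remaining := remaining st - q\<rparr>"

fun next_state :: "nat \<Rightarrow> step \<Rightarrow> real \<Rightarrow> auction_state \<Rightarrow> auction_state" where
  "next_state k (Offer a) x st = purchase k a (nat \<lfloor>x\<rfloor>) st"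
| "next_state k (Ask a t) x st = st\<lparr>reports := (reports st)(a := (reports st a)(t := x))\<rparr>"
| "next_state k (Learn a) x st = st\<lparr>known := insert a (known st)\<rparr>"

text \<open>An offer is answered by a quantity \<open>q\<close>, sent as the message \<open>real q\<close>; \<open>Learn\<close> steps
  create no node.\<close>

definition messages :: "nat \<Rightarrow> step \<Rightarrow> auction_state \<Rightarrow> real set" where
  "messages k stp st = (case stp of Offer a \<Rightarrow> real ` {..offer_cap k st} | _ \<Rightarrow> UNIV)"

fun auction_tree :: "nat \<Rightarrow> step list \<Rightarrow> auction_state \<Rightarrow> real mech" where
  "auction_tree k [] st = Leaf (sold st) (charged st)"
| "auction_tree k (Learn a # ss) st = auction_tree k ss (next_state k (Learn a) 0 st)"
| "auction_tree k (stp # ss) st =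
     Node (owner stp) (messages k stp st) (\<lambda>x. auction_tree k ss (next_state k stp x st))"

fun state_at :: "nat \<Rightarrow> step list \<Rightarrow> auction_state \<Rightarrow> real list \<Rightarrow> step list \<times> auction_state" where
  "state_at k [] st h = ([], st)"
| "state_at k (Learn a # ss) st h = state_at k ss (next_state k (Learn a) 0 st) h"
| "state_at k (stp # ss) st [] = (stp # ss, st)"
| "state_at k (stp # ss) st (x # h) = state_at k ss (next_state k stp x st) h"

definition sincere_msg :: "nat \<Rightarrow> step \<Rightarrow> (nat \<Rightarrow> real) \<Rightarrow> auction_state \<Rightarrow> real" where
  "sincere_msg k stp v st = (case stp of
      Offer a \<Rightarrow> real (offer_choice k a v st) | Ask a t \<Rightarrow> v t | Learn a \<Rightarrow> 0)"

definition initial_state :: "nat \<Rightarrow> auction_state" where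
  "initial_state m = \<lparr>known = {}, reports = (\<lambda>_ _. 0), sold = (\<lambda>_. 0), charged = (\<lambda>_. 0), remaining = m\<rparr>"

type_synonym strategy_profile = "nat \<Rightarrow> (nat \<Rightarrow> real) \<Rightarrow> real list \<Rightarrow> real"

definition sincere :: "nat \<Rightarrow> nat \<Rightarrow> step list \<Rightarrow> strategy_profile" where
  "sincere k m ss = (\<lambda>_ v h. case state_at k ss (initial_state m) h of
      ([], _) \<Rightarrow> 0 | (stp # _, st) \<Rightarrow> sincere_msg k stp v st)"

text \<open>No bidder receives an offer after one of its own nodes, so at each node all that is still
  open about the owner's outcome is what the current offer adds.\<close>

fun offers_first :: "step list \<Rightarrow> bool" where
  "offers_first [] = True"
| "offers_first (Learn a # ss) = offers_first ss"
| "offers_first (stp # ss) = (Offer (owner stp) \<notin> set ss \<and> offers_first ss)"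

lemma offer_choice_best:
  "offer_choice k a v st \<le> offer_cap k st"
  "q \<le> offer_cap k st \<Longrightarrow> utility k a v st q \<le> utility k a v st (offer_choice k a v st)"
  using arg_max_on_finite[where S="{..offer_cap k st}" and f="utility k a v st"]
  unfolding offer_choice_def Let_def by (auto split: if_splits)

lemma offer_choice_eq:
  assumes "opt_alloc (insert a (known st)) ((reports st)(a := v)) k a = x"
    and "x \<le> offer_cap k st" and "\<And>q. q \<le> offer_cap k st \<Longrightarrow> utility k a v st q \<le> utility k a v st x"
  shows "offer_choice k a v st = x"
  using assms unfolding offer_choice_def Let_def by auto

lemma sincere_msg_in_messages: "sincere_msg k stp v st \<in> messages k stp st"
  using offer_choice_best(1) by (cases stp) (auto simp: sincere_msg_def messages_def)

lemma sincere_msg_best: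
  assumes "owner stp = i" "x \<in> messages k stp st"
  shows "v (sold (next_state k stp x st) i) - charged (next_state k stp x st) i
    \<le> v (sold (next_state k stp (sincere_msg k stp v st) st) i) - charged (next_state k stp (sincere_msg k stp v st) st) i"
proof (cases stp)
  case (Offer a)
  then obtain q where "x = real q" "q \<le> offer_cap k st"
    using assms(2) by (auto simp: messages_def)
  then show ?thesis
    using offer_choice_best(2)[of q k st a v] assms(1) Offer
    by (simp add: purchase_def sincere_msg_def utility_def)
qed (use assms in simp_all)

lemma sum_fun_upd_add:
  fixes f :: "nat \<Rightarrow> nat"
  assumes "a < n"
  shows "(\<Sum>i<n. (f(a := f a + q)) i) = (\<Sum>i<n. f i) + q"
proof -
  have "(\<Sum>i<n. (f(a := f a + q)) i) = (\<Sum>i<n. f i + (if i = a then q else 0))"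
    by (rule sum.cong) auto
  then show ?thesis
    using assms by (simp add: sum.distrib)
qed

lemma wf_auction_tree:
  "(\<forall>stp\<in>set ss. owner stp < n) \<Longrightarrow> (\<Sum>i<n. sold st i) + remaining st \<le> m \<Longrightarrow> wf_mech n m (auction_tree k ss st)"
proof (induction ss arbitrary: st)
  case (Cons stp ss)
  show ?case
  proof (cases stp)
    case (Offer a)
    have "wf_mech n m (auction_tree k ss (purchase k a q st))" if "q \<le> offer_cap k st" for q
      using Cons sum_fun_upd_add[of a n "sold st" q] that Offer by (simp add: purchase_def offer_cap_def)
    then show ?thesis
      using Cons.prems Offer by (auto simp: messages_def)
  qed (use Cons in \<open>simp_all add: messages_def\<close>)
qed simp

lemma subtree_auction_tree:
  "subtree (auction_tree k ss st) h = Some t \<Longrightarrow> t = case_prod (auction_tree k) (state_at k ss st h)"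
  by (induction k ss st h rule: state_at.induct) (auto split: if_splits list.splits)

lemma state_at_suffix: "suffix (fst (state_at k ss st h)) ss"
  by (induction k ss st h rule: state_at.induct) (auto intro: suffix_ConsI)

lemma state_at_not_Learn: "fst (state_at k ss st h) \<noteq> Learn a # rest"
  by (induction k ss st h rule: state_at.induct) auto

lemma auction_tree_node:
  assumes "subtree (auction_tree k ss st) u = Some (Node i M c)"
  obtains stp rest st' where "state_at k ss st u = (stp # rest, st')" "\<forall>a. stp \<noteq> Learn a"
    "owner stp = i" "M = messages k stp st'" "c = (\<lambda>x. auction_tree k rest (next_state k stp x st'))"
proof -
  obtain ss' st' where at: "state_at k ss st u = (ss', st')"
    by fastforce
  then have node: "Node i M c = auction_tree k ss' st'"
    using subtree_auction_tree[OF assms] by simp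
  have "\<forall>a rest. ss' \<noteq> Learn a # rest"
    using state_at_not_Learn[of k ss st u] at by auto
  with node that at show ?thesis
    by (cases ss'; cases "hd ss'") auto
qed

lemma behavior_sincere: "behavior (auction_tree k ss (initial_state m)) i (sincere k m ss i v)"
  unfolding behavior_def
proof (intro allI impI)
  fix u M c
  assume "subtree (auction_tree k ss (initial_state m)) u = Some (Node i M c)"
  then obtain stp rest st' where "state_at k ss (initial_state m) u = (stp # rest, st')"
    "M = messages k stp st'"
    by (rule auction_tree_node)
  then show "sincere k m ss i v u \<in> M"
    using sincere_msg_in_messages by (simp add: sincere_def)
qed

lemma offers_first_Cons: "offers_first (stp # ss) \<Longrightarrow> offers_first ss"
  by (cases stp) auto

lemma offers_first_suffix: "offers_first ss \<Longrightarrow> suffix ss' ss \<Longrightarrow> offers_first ss'"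
  by (induction ss) (auto simp: suffix_Cons dest: offers_first_Cons)

lemma outcome_unchanged:
  "Offer i \<notin> set ss \<Longrightarrow>
    fst (outcome_from (auction_tree k ss st) B h) i = sold st i \<and>
    snd (outcome_from (auction_tree k ss st) B h) i = charged st i"
  by (induction k ss st arbitrary: h rule: auction_tree.induct) (auto simp: purchase_def)

lemma OSP_auction_tree:
  assumes "offers_first ss"
  shows "OSP n m (auction_tree k ss (initial_state m)) (sincere k m ss)"
  unfolding OSP_def
proof (intro allI impI)
  fix i v u M c B B'
  let ?t = "auction_tree k ss (initial_state m)"
  let ?B = "B(i := sincere k m ss i v)"
  assume "i < n" "dm_valuation m v"
    and node: "subtree ?t u = Some (Node i M c)"
    and "profile n ?t B" "profile n ?t B'"
    and on_path: "on_path ?t ?B u" "on_path ?t B' u"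
    and "B' i u \<noteq> sincere k m ss i v u"
  have "B' i u \<in> M"
    using \<open>profile n ?t B'\<close> \<open>i < n\<close> node unfolding profile_def behavior_def by blast
  obtain stp rest st' where at: "state_at k ss (initial_state m) u = (stp # rest, st')"
    and stp: "\<forall>a. stp \<noteq> Learn a" "owner stp = i"
    and M: "M = messages k stp st'" and c: "c = (\<lambda>x. auction_tree k rest (next_state k stp x st'))"
    using node by (rule auction_tree_node)
  have "offers_first (stp # rest)"
    using offers_first_suffix[OF assms] state_at_suffix[of k ss "initial_state m" u] at by simp
  then have "Offer i \<notin> set rest"
    using stp by (cases stp) auto
  then have outcome: "alloc ?t Bx i = sold (next_state k stp (Bx i u) st') i \<and>
      pay ?t Bx i = charged (next_state k stp (Bx i u) st') i" if "on_path ?t Bx u" for Bx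
    using outcome_after_node[OF node that] outcome_unchanged c
    by (simp add: alloc_def pay_def)
  have "?B i u = sincere_msg k stp v st'"
    using at by (simp add: sincere_def)
  then show "v (alloc ?t B' i) - pay ?t B' i \<le> v (alloc ?t ?B i) - pay ?t ?B i"
    using outcome[OF on_path(1)] outcome[OF on_path(2)] sincere_msg_best[OF stp(2)] \<open>B' i u \<in> M\<close> M
    by simp
qed

section \<open>The auction and its sincere run\<close>

text \<open>In \<open>a # zs\<close> the bidder \<open>a\<close> is served after all of \<open>zs\<close>, as the \<open>length zs + 1\<close>-st;
  bidders served before position \<open>L\<close> only report.\<close>

definition block :: "nat \<Rightarrow> nat \<Rightarrow> nat \<Rightarrow> nat \<Rightarrow> step list" where
  "block m L p a = (if p < L then [] else [Offer a]) @ map (Ask a) [0..<Suc m] @ [Learn a]"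

primrec schedule :: "nat \<Rightarrow> nat \<Rightarrow> nat list \<Rightarrow> step list" where
  "schedule m L [] = []"
| "schedule m L (a # zs) = schedule m L zs @ block m L (Suc (length zs)) a"

lemma owner_schedule: "stp \<in> set (schedule m L ys) \<Longrightarrow> owner stp \<in> set ys"
  by (induction ys) (auto simp: block_def split: if_splits)

lemma offers_first_append:
  "offers_first xs \<Longrightarrow> offers_first ys \<Longrightarrow> (\<forall>stp\<in>set xs. Offer (owner stp) \<notin> set ys) \<Longrightarrow>
    offers_first (xs @ ys)"
  by (induction xs rule: offers_first.induct) auto

lemma offers_first_block: "offers_first (block m L p a)"
proof -
  have "offers_first (map (Ask a) ts @ [Learn a])" for ts
    by (induction ts) auto
  then show ?thesis
    by (auto simp: block_def simp del: upt_Suc)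
qed

lemma offers_first_schedule: "distinct ys \<Longrightarrow> offers_first (schedule m L ys)"
proof (induction ys)
  case (Cons a zs)
  have "Offer (owner stp) \<notin> set (block m L (Suc (length zs)) a)" if "stp \<in> set (schedule m L zs)" for stp
    using owner_schedule[OF that] Cons.prems by (auto simp: block_def)
  then show ?case
    using Cons offers_first_block by (simp add: offers_first_append)
qed simp

primrec sincere_run :: "nat \<Rightarrow> (nat \<Rightarrow> nat \<Rightarrow> real) \<Rightarrow> step list \<Rightarrow> auction_state \<Rightarrow> auction_state" where
  "sincere_run k v [] st = st"
| "sincere_run k v (stp # ss) st =
     sincere_run k v ss (next_state k stp (sincere_msg k stp (v (owner stp)) st) st)"

lemma sincere_run_append: "sincere_run k v (xs @ ys) st = sincere_run k v ys (sincere_run k v xs st)"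
  by (induction xs arbitrary: st) auto

lemma sincere_outcome:
  assumes "\<forall>h'. state_at k ss0 (initial_state m) (h @ h') = state_at k ss st h'"
  shows "outcome_from (auction_tree k ss st) (\<lambda>j. sincere k m ss0 j (v j)) h =
    (sold (sincere_run k v ss st), charged (sincere_run k v ss st))"
  using assms
proof (induction ss arbitrary: st h)
  case (Cons stp ss)
  show ?case
  proof (cases "\<exists>a. stp = Learn a")
    case True
    then show ?thesis
      using Cons by auto
  next
    case False
    let ?x = "sincere_msg k stp (v (owner stp)) st"
    have "state_at k ss0 (initial_state m) h = (stp # ss, st)"
      using Cons.prems[rule_format, of "[]"] False by (cases stp) auto
    then have msg: "sincere k m ss0 (owner stp) (v (owner stp)) h = ?x"
      by (simp add: sincere_def)
    have "\<forall>h'. state_at k ss0 (initial_state m) ((h @ [?x]) @ h') = state_at k ss (next_state k stp ?x st) h'"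
      using Cons.prems False by (cases stp) auto
    then have "outcome_from (auction_tree k ss (next_state k stp ?x st)) (\<lambda>j. sincere k m ss0 j (v j)) (h @ [?x]) =
        (sold (sincere_run k v (stp # ss) st), charged (sincere_run k v (stp # ss) st))"
      using Cons.IH by simp
    moreover have "auction_tree k (stp # ss) st =
        Node (owner stp) (messages k stp st) (\<lambda>x. auction_tree k ss (next_state k stp x st))"
      using False by (cases stp) auto
    ultimately show ?thesis
      using msg by simp
  qed
qed simp

lemma sincere_run_asks:
  "sincere_run k v (map (Ask a) [0..<j]) st =
     st\<lparr>reports := (reports st)(a := (\<lambda>t. if t < j then v a t else reports st a t))\<rparr>"
proof (induction j)
  case 0
  have "(reports st)(a := reports st a) = reports st"
    by simp
  then show ?case
    by simp
next
  case (Suc j)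
  then show ?case
    by (simp add: sincere_run_append sincere_msg_def fun_eq_iff)
qed

lemma sincere_run_block:
  fixes k L p :: nat
  assumes "reports st a = (\<lambda>_. 0)" "dm_valuation m (v a)"
  defines "q \<equiv> if p < L then 0 else offer_choice k a (v a) st"
  defines "st' \<equiv> sincere_run k v (block m L p a) st"
  shows "known st' = insert a (known st)" "reports st' = (reports st)(a := v a)"
    "sold st' = (sold st)(a := sold st a + q)" "remaining st' = remaining st - q"
proof -
  define st1 where "st1 = sincere_run k v (if p < L then [] else [Offer a]) st"
  have st1: "known st1 = known st" "reports st1 = reports st"
    "sold st1 = (sold st)(a := sold st a + q)" "remaining st1 = remaining st - q"
    unfolding st1_def q_def by (simp_all add: sincere_msg_def purchase_def)
  have st': "st' = sincere_run k v [Learn a] (sincere_run k v (map (Ask a) [0..<Suc m]) st1)"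
    unfolding st'_def st1_def block_def by (simp only: sincere_run_append)
  have "(\<lambda>t. if t < Suc m then v a t else reports st1 a t) = v a"
    using assms(1,2) st1(2) by (auto simp: dm_valuation_def fun_eq_iff)
  then show "known st' = insert a (known st)" "reports st' = (reports st)(a := v a)"
    "sold st' = (sold st)(a := sold st a + q)" "remaining st' = remaining st - q"
    unfolding st' sincere_run_asks using st1 by simp_all
qed

text \<open>\<open>planned_sales\<close> counts the units the offered bidders would buy if each bought its share in
  an optimal allocation of \<open>k\<close> units among the bidders served so far; \<open>secured_value\<close> sums
  the values of those shares that are bought for sure, because the planned sales before them
  leave at least \<open>k\<close> units.\<close>

primrec planned_sales :: "nat \<Rightarrow> nat \<Rightarrow> (nat \<Rightarrow> nat \<Rightarrow> real) \<Rightarrow> nat list \<Rightarrow> nat" where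
  "planned_sales k L v [] = 0"
| "planned_sales k L v (a # zs) =
     (if L \<le> Suc (length zs) then opt_alloc (set (a # zs)) v k a else 0) + planned_sales k L v zs"

primrec secured_value :: "nat \<Rightarrow> nat \<Rightarrow> nat \<Rightarrow> (nat \<Rightarrow> nat \<Rightarrow> real) \<Rightarrow> nat list \<Rightarrow> real" where
  "secured_value k L m v [] = 0"
| "secured_value k L m v (a # zs) =
     (if L \<le> Suc (length zs) \<and> planned_sales k L v zs \<le> m - k
      then v a (opt_alloc (set (a # zs)) v k a) else 0) + secured_value k L m v zs"

definition run_invariant ::
    "nat \<Rightarrow> nat \<Rightarrow> nat \<Rightarrow> (nat \<Rightarrow> nat \<Rightarrow> real) \<Rightarrow> nat list \<Rightarrow> auction_state \<Rightarrow> bool" where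
  "run_invariant k L m v zs st \<longleftrightarrow>
     known st = set zs \<and> (\<forall>i\<in>set zs. reports st i = v i) \<and>
     (\<forall>i. i \<notin> set zs \<longrightarrow> reports st i = (\<lambda>_. 0) \<and> sold st i = 0) \<and>
     remaining st + sum (sold st) (set zs) = m \<and> sum (sold st) (set zs) \<le> planned_sales k L v zs \<and>
     secured_value k L m v zs \<le> (\<Sum>i\<in>set zs. v i (sold st i))"

lemma sincere_offer_choice:
  assumes inv: "run_invariant k L m v zs st" and a: "a \<notin> set zs" and "k \<le> m"
  defines "x \<equiv> opt_alloc (set (a # zs)) v k a"
  shows "offer_choice k a (v a) st \<le> remaining st" "offer_choice k a (v a) st \<le> x"
    "planned_sales k L v zs \<le> m - k \<Longrightarrow> offer_choice k a (v a) st = x"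
proof -
  have known: "known st = set zs" and reports: "\<forall>i\<in>set zs. reports st i = v i"
    and "sold st a = 0" and "remaining st + sum (sold st) (set zs) = m"
    and "sum (sold st) (set zs) \<le> planned_sales k L v zs"
    using inv a unfolding run_invariant_def by auto
  have x: "opt_alloc (insert a (known st)) ((reports st)(a := v a)) k a = x"
    unfolding x_def known using reports by (subst opt_alloc_cong[where w'=v]) auto
  have "price k st q = max_value (set zs) v k - max_value (set zs) v (k - q)" for q
    unfolding price_def known using reports by (simp cong: max_value_cong)
  then have best: "utility k a (v a) st q \<le> utility k a (v a) st x" if "q \<le> k" for q
    using opt_share_best_response[of "set zs" a q k v] that a \<open>sold st a = 0\<close>
    unfolding utility_def x_def by simp
  have "x \<le> k"
    unfolding x_def by (rule opt_alloc_le) auto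
  have choice_eq: "offer_choice k a (v a) st = x" if "x \<le> offer_cap k st"
    using offer_choice_eq[OF x that] best by (simp add: offer_cap_def)
  show "offer_choice k a (v a) st \<le> remaining st"
    using offer_choice_best(1)[of k a "v a" st] by (simp add: offer_cap_def)
  show "offer_choice k a (v a) st \<le> x"
    using offer_choice_best(1)[of k a "v a" st] choice_eq by (cases "x \<le> offer_cap k st") auto
  show "offer_choice k a (v a) st = x" if "planned_sales k L v zs \<le> m - k"
  proof -
    have "k \<le> remaining st"
      using that \<open>k \<le> m\<close> \<open>remaining st + sum (sold st) (set zs) = m\<close>
        \<open>sum (sold st) (set zs) \<le> planned_sales k L v zs\<close> by linarith
    then show ?thesis
      using choice_eq \<open>x \<le> k\<close> by (simp add: offer_cap_def)
  qed
qed

lemma run_invariant_Cons: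
  assumes inv: "run_invariant k L m v zs st" and a: "a \<notin> set zs"
    and dm: "dm_valuation m (v a)" and "k \<le> m"
  shows "run_invariant k L m v (a # zs) (sincere_run k v (block m L (Suc (length zs)) a) st)"
proof -
  define x where "x = opt_alloc (set (a # zs)) v k a"
  define q where "q = (if Suc (length zs) < L then 0 else offer_choice k a (v a) st)"
  define st' where "st' = sincere_run k v (block m L (Suc (length zs)) a) st"
  have "reports st a = (\<lambda>_. 0)" and "sold st a = 0"
    using inv a by (auto simp: run_invariant_def)
  note st' = sincere_run_block[where v=v and p="Suc (length zs)" and L=L and k=k, OF this(1) dm,
      folded q_def st'_def]
  have q: "q \<le> remaining st" "q \<le> (if L \<le> Suc (length zs) then x else 0)"
    "L \<le> Suc (length zs) \<and> planned_sales k L v zs \<le> m - k \<longrightarrow> q = x"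
    using sincere_offer_choice[OF inv a \<open>k \<le> m\<close>] unfolding q_def x_def by auto
  have sold_zs: "sum (sold st') (set zs) = sum (sold st) (set zs)"
    "(\<Sum>i\<in>set zs. v i (sold st' i)) = (\<Sum>i\<in>set zs. v i (sold st i))"
    using a st'(3) by (auto intro: sum.cong)
  have "sum (sold st') (set (a # zs)) = q + sum (sold st) (set zs)"
    and "(\<Sum>i\<in>set (a # zs). v i (sold st' i)) = v a q + (\<Sum>i\<in>set zs. v i (sold st i))"
    using a sold_zs st'(3) \<open>sold st a = 0\<close> by simp_all
  moreover have "0 \<le> v a q"
    using dm_valuation_nonneg[OF dm] .
  ultimately show ?thesis
    using inv q st' unfolding st'_def[symmetric] run_invariant_def x_def by (auto split: if_splits)
qed

lemma run_invariant_schedule: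
  assumes "distinct ys" "\<forall>i\<in>set ys. dm_valuation m (v i)" "k \<le> m"
  shows "run_invariant k L m v ys (sincere_run k v (schedule m L ys) (initial_state m))"
  using assms
proof (induction ys)
  case Nil
  then show ?case
    by (simp add: run_invariant_def initial_state_def)
next
  case (Cons a zs)
  then show ?case
    using run_invariant_Cons[of k L m v zs _ a] by (simp add: sincere_run_append)
qed

section \<open>Averaging over the order of service\<close>

lemma sum_permutations_of_set_Cons:
  assumes "finite B" "B \<noteq> {}"
  shows "(\<Sum>ys\<in>permutations_of_set B. f ys) = (\<Sum>x\<in>B. \<Sum>zs\<in>permutations_of_set (B - {x}). f (x # zs))"
proof -
  have "(\<Sum>ys\<in>permutations_of_set B. f ys) = (\<Sum>x\<in>B. \<Sum>ys\<in>(#) x ` permutations_of_set (B - {x}). f ys)"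
    unfolding permutations_of_set_nonempty[OF assms(2)] using assms(1) by (intro sum.UNION_disjoint) auto
  also have "\<dots> = (\<Sum>x\<in>B. \<Sum>zs\<in>permutations_of_set (B - {x}). f (x # zs))"
  proof (rule sum.cong[OF refl])
    fix x
    have "inj_on ((#) x) (permutations_of_set (B - {x}))"
      by simp
    then show "(\<Sum>ys\<in>(#) x ` permutations_of_set (B - {x}). f ys) = (\<Sum>zs\<in>permutations_of_set (B - {x}). f (x # zs))"
      by (simp add: sum.reindex)
  qed
  finally show ?thesis .
qed

lemma permutations_of_set_Cons:
  assumes "finite B" "x \<in> B" "zs \<in> permutations_of_set (B - {x})"
  shows "set (x # zs) = B" "length zs = card B - 1"
  using assms by (auto simp: permutations_of_set_def distinct_card[symmetric])

lemma planned_sales_short: "length ys < L \<Longrightarrow> planned_sales k L v ys = 0"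
  by (induction ys) auto

lemma secured_value_nonneg: "\<forall>i\<in>set ys. dm_valuation m (v i) \<Longrightarrow> 0 \<le> secured_value k L m v ys"
  by (induction ys) (auto intro: add_nonneg_nonneg dm_valuation_nonneg)

lemma sum_planned_sales_permutations:
  assumes "finite B" "card B = Suc j" "L \<le> Suc j"
  shows "(\<Sum>ys\<in>permutations_of_set B. planned_sales k L v ys)
    = fact j * sum (opt_alloc B v k) B + (\<Sum>x\<in>B. \<Sum>zs\<in>permutations_of_set (B - {x}). planned_sales k L v zs)"
proof -
  have "B \<noteq> {}"
    using assms(2) by auto
  then have "(\<Sum>ys\<in>permutations_of_set B. planned_sales k L v ys)
      = (\<Sum>x\<in>B. \<Sum>zs\<in>permutations_of_set (B - {x}). opt_alloc B v k x + planned_sales k L v zs)"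
    unfolding sum_permutations_of_set_Cons[OF assms(1) \<open>B \<noteq> {}\<close>]
    using permutations_of_set_Cons[OF assms(1)] assms(2,3) by (intro sum.cong refl) auto
  also have "\<dots> = fact j * sum (opt_alloc B v k) B + (\<Sum>x\<in>B. \<Sum>zs\<in>permutations_of_set (B - {x}). planned_sales k L v zs)"
    using assms(1,2) by (simp add: sum.distrib sum_distrib_left)
  finally show ?thesis .
qed

lemma planned_sales_sum_bound:
  assumes "finite B"
  shows "L * (\<Sum>ys\<in>permutations_of_set B. planned_sales k L v ys) \<le> fact (card B) * k * (card B + 1 - L)"
  using assms
proof (induction "card B" arbitrary: B)
  case 0
  then show ?case by simp
next
  case (Suc j)
  show ?case
  proof (cases "L \<le> Suc j")
    case False
    then have "planned_sales k L v ys = 0" if "ys \<in> permutations_of_set B" for ys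
      using that Suc.hyps(2) by (intro planned_sales_short) (auto simp: permutations_of_set_def distinct_card[symmetric])
    then show ?thesis
      by simp
  next
    case True
    let ?P = "\<lambda>x. permutations_of_set (B - {x})"
    have split: "L * (\<Sum>ys\<in>permutations_of_set B. planned_sales k L v ys)
        = fact j * (L * sum (opt_alloc B v k) B) + (\<Sum>x\<in>B. L * (\<Sum>zs\<in>?P x. planned_sales k L v zs))"
      unfolding sum_planned_sales_permutations[OF Suc.prems Suc.hyps(2)[symmetric] True]
      by (simp add: algebra_simps sum_distrib_left)
    have "L * sum (opt_alloc B v k) B \<le> Suc j * k"
      using True opt_alloc_sum_le[OF Suc.prems, of v k] by (intro mult_le_mono) auto
    moreover have "(\<Sum>x\<in>B. L * (\<Sum>zs\<in>?P x. planned_sales k L v zs)) \<le> Suc j * (fact j * k * (j + 1 - L))"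
    proof -
      have "L * (\<Sum>zs\<in>?P x. planned_sales k L v zs) \<le> fact j * k * (j + 1 - L)" if "x \<in> B" for x
        using Suc.hyps(1)[of "B - {x}"] Suc.hyps(2)[symmetric] Suc.prems that by simp
      then have "(\<Sum>x\<in>B. L * (\<Sum>zs\<in>?P x. planned_sales k L v zs)) \<le> (\<Sum>x\<in>B. fact j * k * (j + 1 - L))"
        by (intro sum_mono)
      then show ?thesis
        using Suc.hyps(2) by simp
    qed
    ultimately have "L * (\<Sum>ys\<in>permutations_of_set B. planned_sales k L v ys)
        \<le> fact j * (Suc j * k) + Suc j * (fact j * k * (j + 1 - L))"
      unfolding split by (intro add_mono mult_le_mono2) auto
    also have "\<dots> = fact (Suc j) * k * Suc (j + 1 - L)"
      by (simp only: fact_Suc of_nat_id add_mult_distrib add_mult_distrib2 mult_Suc mult_Suc_right mult_ac)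
    also have "Suc (j + 1 - L) = Suc j + 1 - L"
      using True by simp
    finally show ?thesis
      using Suc.hyps(2) by simp
  qed
qed

lemma card_permutations_enough_supply:
  assumes "finite B" and "2 * (card B + 1 - L) \<le> L" and "k \<le> m - k + 1"
  shows "fact (card B) \<le> 2 * card {zs \<in> permutations_of_set B. planned_sales k L v zs \<le> m - k}"
proof -
  let ?P = "permutations_of_set B"
  let ?good = "{zs \<in> ?P. planned_sales k L v zs \<le> m - k}"
  let ?bad = "{zs \<in> ?P. \<not> planned_sales k L v zs \<le> m - k}"
  let ?S = "\<Sum>ys\<in>?P. planned_sales k L v ys"
  have "card ?good + card ?bad = card (?good \<union> ?bad)"
    using assms(1) by (intro card_Un_disjoint[symmetric]) auto
  also have "?good \<union> ?bad = ?P"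
    by auto
  finally have "card ?good + card ?bad = fact (card B)"
    using assms(1) by simp
  moreover have "card ?bad * (m - k + 1) \<le> ?S" \<comment> \<open>Markov's inequality\<close>
  proof -
    have "card ?bad * (m - k + 1) \<le> (\<Sum>zs\<in>?bad. planned_sales k L v zs)"
      using sum_mono[of ?bad "\<lambda>_. m - k + 1" "planned_sales k L v"] by simp
    also have "\<dots> \<le> ?S"
      using assms(1) by (intro sum_mono2) auto
    finally show ?thesis .
  qed
  moreover have "2 * ?S \<le> fact (card B) * k"
  proof -
    have "L * (2 * ?S) \<le> 2 * (fact (card B) * k * (card B + 1 - L))"
      using planned_sales_sum_bound[OF assms(1), of L k v] by simp
    also have "\<dots> \<le> L * (fact (card B) * k)"
      using mult_le_mono2[OF assms(2), of "fact (card B) * k"] by (simp add: algebra_simps)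
    finally show ?thesis
      using assms(2) by (cases "L = 0") auto
  qed
  ultimately have "(2 * card ?bad) * Suc (m - k) \<le> fact (card B) * Suc (m - k)"
    using mult_le_mono2[OF assms(3), of "fact (card B)"] by simp
  then have "2 * card ?bad \<le> fact (card B)"
    using mult_le_cancel2[of "2 * card ?bad" "Suc (m - k)" "fact (card B)"] by simp
  with \<open>card ?good + card ?bad = fact (card B)\<close> show ?thesis
    by linarith
qed

lemma secured_value_last_bound:
  assumes "finite B" "card B = Suc j" "2 * (Suc j - L) \<le> L" "k \<le> m - k + 1"
    "\<forall>i\<in>B. dm_valuation m (v i)"
  shows "real (fact j) * max_value B v k \<le>
    2 * (\<Sum>x\<in>B. \<Sum>zs\<in>permutations_of_set (B - {x}).
           if planned_sales k L v zs \<le> m - k then v x (opt_alloc B v k x) else 0)"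
proof -
  let ?good = "\<lambda>x. {zs \<in> permutations_of_set (B - {x}). planned_sales k L v zs \<le> m - k}"
  have "real (fact j) * v x (opt_alloc B v k x) \<le> 2 * (real (card (?good x)) * v x (opt_alloc B v k x))"
    if "x \<in> B" for x
  proof -
    have "fact j \<le> 2 * card (?good x)"
      using card_permutations_enough_supply[of "B - {x}" L k m v] assms that by simp
    then have fact_le: "real (fact j) \<le> 2 * real (card (?good x))"
      by (metis of_nat_le_iff of_nat_mult of_nat_numeral)
    have "0 \<le> v x (opt_alloc B v k x)"
      using dm_valuation_nonneg assms(5) that by blast
    from mult_right_mono[OF fact_le this] show ?thesis
      by (simp add: mult.assoc)
  qed
  then have "(\<Sum>x\<in>B. real (fact j) * v x (opt_alloc B v k x)) \<le>
      (\<Sum>x\<in>B. 2 * (real (card (?good x)) * v x (opt_alloc B v k x)))"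
    by (rule sum_mono)
  moreover have "(\<Sum>zs\<in>permutations_of_set (B - {x}). if planned_sales k L v zs \<le> m - k then v x (opt_alloc B v k x) else 0)
      = real (card (?good x)) * v x (opt_alloc B v k x)" for x
    using assms(1) by (simp add: sum.If_cases Int_def)
  ultimately show ?thesis
    by (simp add: max_value_def sum_distrib_left)
qed

lemma sum_secured_value_permutations:
  assumes "finite B" "card B = Suc j" "L \<le> Suc j"
  shows "(\<Sum>ys\<in>permutations_of_set B. secured_value k L m v ys)
    = (\<Sum>x\<in>B. \<Sum>zs\<in>permutations_of_set (B - {x}).
         if planned_sales k L v zs \<le> m - k then v x (opt_alloc B v k x) else 0)
      + (\<Sum>x\<in>B. \<Sum>zs\<in>permutations_of_set (B - {x}). secured_value k L m v zs)"
proof -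
  have "B \<noteq> {}"
    using assms(2) by auto
  then show ?thesis
    unfolding sum_permutations_of_set_Cons[OF assms(1) \<open>B \<noteq> {}\<close>] sum.distrib[symmetric]
    using permutations_of_set_Cons[OF assms(1)] assms(2,3) by (intro sum.cong refl) auto
qed

lemma secured_value_sum_bound:
  assumes "finite B" "2 * (card B - L) \<le> L" "k \<le> m - k + 1" "\<forall>i\<in>B. dm_valuation m (v i)"
  shows "real (fact (card B - 1)) * real (card B + 1 - L) * max_value B v k
    \<le> 2 * (\<Sum>ys\<in>permutations_of_set B. secured_value k L m v ys)"
  using assms
proof (induction "card B" arbitrary: B)
  case 0
  then show ?case
    by (simp add: max_value_def)
next
  case (Suc j)
  have "0 < L"
    using Suc.prems(2) Suc.hyps(2) by (cases L) auto
  have nonneg: "0 \<le> (\<Sum>ys\<in>permutations_of_set B. secured_value k L m v ys)"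
    using Suc.prems(4) by (intro sum_nonneg secured_value_nonneg) (auto simp: permutations_of_set_def)
  show ?case
  proof (cases "L \<le> Suc j")
    case False
    then show ?thesis
      using nonneg Suc.hyps(2)[symmetric] by simp
  next
    case True
    let ?P = "\<lambda>x. permutations_of_set (B - {x})"
    let ?last = "\<lambda>x zs. if planned_sales k L v zs \<le> m - k then v x (opt_alloc B v k x) else 0"
    have "real (fact j) * max_value B v k \<le> 2 * (\<Sum>x\<in>B. \<Sum>zs\<in>?P x. ?last x zs)"
      using secured_value_last_bound[OF Suc.prems(1) Suc.hyps(2)[symmetric], of L k m v]
        Suc.prems Suc.hyps(2)[symmetric] by simp
    moreover have "real (fact j) * real (j + 1 - L) * max_value B v k
        \<le> 2 * (\<Sum>x\<in>B. \<Sum>zs\<in>?P x. secured_value k L m v zs)"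
    proof -
      have "real (fact (j - 1)) * real (j + 1 - L) * max_value (B - {x}) v k
          \<le> 2 * (\<Sum>zs\<in>?P x. secured_value k L m v zs)" if "x \<in> B" for x
        using Suc.hyps(1)[of "B - {x}"] Suc.hyps(2)[symmetric] Suc.prems that by simp
      then have "real (fact (j - 1)) * real (j + 1 - L) * (\<Sum>x\<in>B. max_value (B - {x}) v k)
          \<le> 2 * (\<Sum>x\<in>B. \<Sum>zs\<in>?P x. secured_value k L m v zs)"
        by (simp add: sum_distrib_left sum_mono)
      moreover have "real (fact (j - 1)) * real (j + 1 - L) * (real j * max_value B v k)
          \<le> real (fact (j - 1)) * real (j + 1 - L) * (\<Sum>x\<in>B. max_value (B - {x}) v k)"
        using sum_max_value_remove[OF Suc.prems(1), of v k] Suc.hyps(2)[symmetric]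
        by (intro mult_left_mono) auto
      moreover have "real (fact j) * real (j + 1 - L) * max_value B v k
          = real (fact (j - 1)) * real (j + 1 - L) * (real j * max_value B v k)"
        using \<open>0 < L\<close> by (cases j) (auto simp: algebra_simps)
      ultimately show ?thesis
        by linarith
    qed
    moreover have "real (Suc j + 1 - L) = 1 + real (j + 1 - L)"
      using True by simp
    ultimately show ?thesis
      unfolding sum_secured_value_permutations[OF Suc.prems(1) Suc.hyps(2)[symmetric] True]
      using Suc.hyps(2)[symmetric] by (simp add: algebra_simps)
  qed
qed

section \<open>The random auction\<close>

definition auction :: "nat \<Rightarrow> nat \<Rightarrow> nat \<Rightarrow> nat list \<Rightarrow> real mech \<times> strategy_profile" where
  "auction k L m ys = (auction_tree k (schedule m L ys) (initial_state m), sincere k m (schedule m L ys))"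

definition random_auction :: "nat \<Rightarrow> nat \<Rightarrow> nat \<Rightarrow> nat \<Rightarrow> (real mech \<times> strategy_profile) pmf" where
  "random_auction n m k L = map_pmf (auction k L m) (pmf_of_set (permutations_of_set {..<n}))"

lemma set_pmf_random_auction: "set_pmf (random_auction n m k L) = auction k L m ` permutations_of_set {..<n}"
  by (simp add: random_auction_def)

lemma expectation_random_auction:
  fixes f :: "real mech \<times> strategy_profile \<Rightarrow> real"
  shows "measure_pmf.expectation (random_auction n m k L) f
    = (\<Sum>ys\<in>permutations_of_set {..<n}. f (auction k L m ys)) / fact n"
proof -
  have "permutations_of_set {..<n} \<noteq> {}" "finite (permutations_of_set {..<n})"
    by auto
  then show ?thesis
    unfolding random_auction_def by (simp add: integral_pmf_of_set)
qed

lemma universally_OSP_random_auction: "universally_OSP n m (random_auction n m k L)"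
  unfolding universally_OSP_def set_pmf_random_auction
proof (clarsimp simp only: auction_def)
  fix ys
  assume "ys \<in> permutations_of_set {..<n}"
  then have "distinct ys" "set ys = {..<n}"
    by (auto simp: permutations_of_set_def)
  let ?t = "auction_tree k (schedule m L ys) (initial_state m)"
  have "wf_mech n m ?t"
    using owner_schedule[of _ m L ys] \<open>set ys = {..<n}\<close>
    by (intro wf_auction_tree) (auto simp: initial_state_def)
  moreover have "strategies n m ?t (sincere k m (schedule m L ys))"
    unfolding strategies_def using behavior_sincere by blast
  moreover have "OSP n m ?t (sincere k m (schedule m L ys))"
    by (rule OSP_auction_tree[OF offers_first_schedule[OF \<open>distinct ys\<close>]])
  ultimately show "wf_mech n m ?t \<and> strategies n m ?t (sincere k m (schedule m L ys)) \<and>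
      OSP n m ?t (sincere k m (schedule m L ys))"
    by blast
qed

lemma secured_value_le_welfare:
  assumes "ys \<in> permutations_of_set {..<n}" "\<forall>i<n. dm_valuation m (v i)" "k \<le> m"
  shows "secured_value k L m v ys \<le> case_prod (\<lambda>t S. welfare n t S v) (auction k L m ys)"
proof -
  let ?ss = "schedule m L ys"
  let ?st = "sincere_run k v ?ss (initial_state m)"
  have ys: "distinct ys" "set ys = {..<n}"
    using assms(1) by (auto simp: permutations_of_set_def)
  then have "run_invariant k L m v ys ?st"
    using assms(2,3) by (intro run_invariant_schedule) auto
  moreover have "outcome_from (auction_tree k ?ss (initial_state m)) (\<lambda>j. sincere k m ?ss j (v j)) [] = (sold ?st, charged ?st)"
    by (rule sincere_outcome) simp
  ultimately show ?thesis
    using ys(2) by (simp add: auction_def welfare_def alloc_def run_invariant_def)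
qed

lemma welfare_nonneg: "\<forall>i<n. dm_valuation m (v i) \<Longrightarrow> 0 \<le> welfare n t S v"
  unfolding welfare_def by (auto intro: sum_nonneg dm_valuation_nonneg)

lemma sum_welfare_auction_bound:
  assumes "\<forall>i<n. dm_valuation m (v i)" "k \<le> m" "k \<le> m - k + 1" "2 * (n - L) \<le> L"
  shows "real (fact (n - 1)) * real (n + 1 - L) * max_value {..<n} v k
    \<le> 2 * (\<Sum>ys\<in>permutations_of_set {..<n}. case_prod (\<lambda>t S. welfare n t S v) (auction k L m ys))"
proof -
  let ?P = "permutations_of_set {..<n}"
  have "(\<Sum>ys\<in>?P. secured_value k L m v ys) \<le> (\<Sum>ys\<in>?P. case_prod (\<lambda>t S. welfare n t S v) (auction k L m ys))"
    using secured_value_le_welfare assms(1,2) by (intro sum_mono) blast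
  moreover have "real (fact (n - 1)) * real (n + 1 - L) * max_value {..<n} v k
      \<le> 2 * (\<Sum>ys\<in>?P. secured_value k L m v ys)"
    using secured_value_sum_bound[of "{..<n}" L k m v] assms(1,3,4) by simp
  ultimately show ?thesis
    by linarith
qed

lemma expected_welfare_random_auction:
  assumes "\<forall>i<n. dm_valuation m (v i)" "k \<le> m" "k \<le> m - k + 1" "2 * (n - L) \<le> L"
  defines "E \<equiv> measure_pmf.expectation (random_auction n m k L) (\<lambda>(t, S). welfare n t S v)"
  shows "0 \<le> E" "real (n + 1 - L) * max_value {..<n} v k \<le> 2 * real n * E"
proof -
  let ?S = "\<Sum>ys\<in>permutations_of_set {..<n}. case_prod (\<lambda>t S. welfare n t S v) (auction k L m ys)"
  have E: "E = ?S / fact n"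
    unfolding E_def expectation_random_auction by (simp add: case_prod_beta)
  show "0 \<le> E"
    unfolding E using welfare_nonneg[OF assms(1)] by (auto intro!: divide_nonneg_nonneg sum_nonneg split: prod.split)
  show "real (n + 1 - L) * max_value {..<n} v k \<le> 2 * real n * E"
  proof (cases n)
    case 0
    then show ?thesis
      by (simp add: max_value_def)
  next
    case (Suc n')
    let ?f = "fact (n - 1) :: real"
    have "fact n = real n * ?f" and "real n \<noteq> 0"
      using Suc by (simp_all add: algebra_simps)
    then have "2 * real n * E = 2 * ?S / ?f"
      unfolding E by simp
    moreover have "real (n + 1 - L) * max_value {..<n} v k * ?f \<le> 2 * ?S"
      using sum_welfare_auction_bound[OF assms(1-4)] by (simp add: mult_ac)
    ultimately show ?thesis
      by (simp add: pos_le_divide_eq)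
  qed
qed

lemma approximation_random_auction: "approximation n m 400 (random_auction n m ((m + 1) div 2) (n - n div 3))"
  unfolding approximation_def
proof (intro allI impI)
  fix v :: "nat \<Rightarrow> nat \<Rightarrow> real"
  assume dm: "\<forall>i<n. dm_valuation m (v i)"
  let ?k = "(m + 1) div 2" and ?L = "n - n div 3"
  let ?G = "max_value {..<n} v ?k"
  let ?E = "measure_pmf.expectation (random_auction n m ?k ?L) (\<lambda>(t, S). welfare n t S v)"
  let ?D = "real (n + 1 - ?L)"
  note E = expected_welfare_random_auction[of n m v ?k ?L]
  have "0 \<le> ?E"
    using E(1) dm by simp
  have "n \<le> 3 * (n + 1 - ?L)"
    by simp
  then have "2 * real n \<le> ?D * 6"
    by linarith
  have "?D * ?G \<le> 2 * real n * ?E"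
    using E(2) dm by simp
  also have "\<dots> \<le> ?D * 6 * ?E"
    using mult_right_mono[OF \<open>2 * real n \<le> ?D * 6\<close> \<open>0 \<le> ?E\<close>] .
  finally have "?D * ?G \<le> ?D * (6 * ?E)"
    by (simp only: mult.assoc)
  moreover have "0 < ?D"
    by simp
  ultimately have "?G \<le> 6 * ?E"
    by (rule mult_left_le_imp_le)
  moreover have "OPT n m v \<le> 2 * ?G"
    using dm by (intro OPT_le_twice_max_value) auto
  ultimately show "OPT n m v \<le> 400 * ?E"
    using \<open>0 \<le> ?E\<close> by simp
qed

theorem theorem3p11:
  fixes n m :: nat
  shows "\<exists>R :: (real mech \<times> (nat \<Rightarrow> (nat \<Rightarrow> real) \<Rightarrow> real list \<Rightarrow> real)) pmf.
           universally_OSP n m R \<and> approximation n m 400 R"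
  using universally_OSP_random_auction approximation_random_auction by blast

end
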